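(* Let $f,g\in\mathbb{C}[t]$ be nonzero univariate polynomials, let $t=\theta_1+\theta_2$ in $D_2$ (where $\theta_i=y_i\partial_{y_i}$), and let $P_1,P_2,Q_1,Q_2\in\mathbb{C}[s_1,s_2]$ be bivariate polynomials with $\deg f+\deg Q_i=\deg g+\deg P_i$ ($i=1,2$), none of whose principal symbols (as operators $P_i(\theta),Q_i(\theta)$) vanish along $y_1z_1+y_2z_2=0$, and satisfying \[[\,y_1P_1(\theta),\,y_2P_2(\theta)\,]=0,\qquad Q_2(\theta+e_2)\,Q_1(\theta+e_1+e_2)=Q_1(\theta+e_1)\,Q_2(\theta+e_1+e_2).\] Let $U_i=f(t)Q_i(\theta)-y_i\,g(t)P_i(\theta)$ for $i=1,2$ and $\Psi=y_1Q_2(\theta)P_1(\theta)-y_2Q_1(\theta)P_2(\theta)$. Then $R(f,g)\,\Psi$ lies in the left ideal $(U_1,U_2)\subseteq D_2$, where $R(f,g)$ is the resultant of $f$ and $g$.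
   Context: $D_2$ is the Weyl algebra in $y_1,y_2,\partial_{y_1},\partial_{y_2}$; $\theta=(\theta_1,\theta_2)$, and for a polynomial $P$, $P(\theta+e_i)$ denotes the polynomial $P$ with its $i$-th argument shifted by $1$; $[\cdot,\cdot]$ is the commutator. The principal symbol of an operator lives in $\mathbb{C}[y_1,y_2,z_1,z_2]$. *)

theory Defs
  imports "HOL-Library.Poly_Mapping" "Subresultants.Resultant_Prelim"
begin

text \<open>Elements of the Weyl algebra D_2 over the complex numbers, in normally ordered form:
  the finitely supported map c represents the sum over (a1,a2,b1,b2) of
  c(a1,a2,b1,b2) * y1^a1 y2^a2 d1^b1 d2^b2  (d_i = partial derivative in y_i).\<close>

type_synonym weyl = "(nat \<times> nat \<times> nat \<times> nat) \<Rightarrow>\<^sub>0 complex"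

type_synonym bipoly = "(nat \<times> nat) \<Rightarrow>\<^sub>0 complex"

text \<open>Product of two normally ordered monomials, via the Leibniz rule
  d^b y^c = sum_k (b choose k) (c choose k) k! y^(c-k) d^(b-k) in each variable.\<close>
definition wmono_mult :: "nat \<times> nat \<times> nat \<times> nat \<Rightarrow> nat \<times> nat \<times> nat \<times> nat \<Rightarrow> complex \<Rightarrow> weyl" where
  "wmono_mult p q r = (case p of (a1, a2, b1, b2) \<Rightarrow> case q of (c1, c2, d1, d2) \<Rightarrow>
     (\<Sum>k1\<in>{..min b1 c1}. \<Sum>k2\<in>{..min b2 c2}.
        Poly_Mapping.single (a1 + c1 - k1, a2 + c2 - k2, b1 + d1 - k1, b2 + d2 - k2)
          (r * of_nat ((b1 choose k1) * (c1 choose k1) * fact k1)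
             * of_nat ((b2 choose k2) * (c2 choose k2) * fact k2))))"

definition wmult :: "weyl \<Rightarrow> weyl \<Rightarrow> weyl" (infixl \<open>\<star>\<close> 70) where
  "wmult c d = (\<Sum>p\<in>Poly_Mapping.keys c. \<Sum>q\<in>Poly_Mapping.keys d. wmono_mult p q (Poly_Mapping.lookup c p * Poly_Mapping.lookup d q))"

definition wscale :: "complex \<Rightarrow> weyl \<Rightarrow> weyl" where
  "wscale r c = (\<Sum>p\<in>Poly_Mapping.keys c. Poly_Mapping.single p (r * Poly_Mapping.lookup c p))"

definition wone :: weyl where "wone = Poly_Mapping.single (0, 0, 0, 0) 1"

primrec wpow :: "weyl \<Rightarrow> nat \<Rightarrow> weyl" where
  "wpow c 0 = wone"
| "wpow c (Suc n) = c \<star> wpow c n"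

definition wy1 :: weyl where "wy1 = Poly_Mapping.single (1, 0, 0, 0) 1"
definition wy2 :: weyl where "wy2 = Poly_Mapping.single (0, 1, 0, 0) 1"

definition theta1 :: weyl where "theta1 = Poly_Mapping.single (1, 0, 1, 0) 1"
definition theta2 :: weyl where "theta2 = Poly_Mapping.single (0, 1, 0, 1) 1"

definition bieval :: "bipoly \<Rightarrow> weyl \<Rightarrow> weyl \<Rightarrow> weyl" where
  "bieval P x1 x2 = (\<Sum>(i, j)\<in>Poly_Mapping.keys P. wscale (Poly_Mapping.lookup P (i, j)) (wpow x1 i \<star> wpow x2 j))"

definition ueval :: "complex poly \<Rightarrow> weyl \<Rightarrow> weyl" where
  "ueval f x = (\<Sum>k\<le>degree f. wscale (coeff f k) (wpow x k))"

definition bideg :: "bipoly \<Rightarrow> nat" where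
  "bideg P = Max ((\<lambda>(i, j). i + j) ` Poly_Mapping.keys P \<union> {0})"

text \<open>Order of an operator (total degree in y and d of its normally ordered form) and its
  principal symbol in C[y1,y2,z1,z2], viewed as a polynomial function.\<close>
definition word :: "weyl \<Rightarrow> nat" where
  "word c = Max ((\<lambda>(a1, a2, b1, b2). a1 + a2 + b1 + b2) ` Poly_Mapping.keys c \<union> {0})"

definition psymb :: "weyl \<Rightarrow> complex \<Rightarrow> complex \<Rightarrow> complex \<Rightarrow> complex \<Rightarrow> complex" where
  "psymb c y1 y2 z1 z2 =
     (\<Sum>(a1, a2, b1, b2)\<in>{m\<in>Poly_Mapping.keys c. (case m of (a1, a2, b1, b2) \<Rightarrow> a1 + a2 + b1 + b2) = word c}.
        Poly_Mapping.lookup c (a1, a2, b1, b2) * y1 ^ a1 * y2 ^ a2 * z1 ^ b1 * z2 ^ b2)"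

definition left_ideal2 :: "weyl \<Rightarrow> weyl \<Rightarrow> weyl set" where
  "left_ideal2 u v = {a \<star> u + b \<star> v | a b. True}"

end

theory Submission
  imports Defs "Subresultants.Subresultant_Gcd" "HOL-Computational_Algebra.Field_as_Ring"
begin

text \<open>Let \<open>D_2\<close> act on formal sums \<open>\<Sum>\<^sub>s u(s) y^s\<close> with complex exponents
  \<open>s \<in> \<complex>\<^sup>2\<close>, recorded by their coefficient functions \<open>u\<close>. This representation is faithful, \<open>\<theta>\<^sub>i\<close>
  acts as multiplication by \<open>s\<^sub>i\<close> and \<open>y\<^sub>i\<close> as the shift \<open>s \<mapsto> s - e\<^sub>i\<close>, so operator identities
  become identities between functions of \<open>s\<close>. In it the two hypotheses on \<open>P\<^sub>i\<close> and \<open>Q\<^sub>i\<close> give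
  \<open>f(t - 1) \<Psi> = y\<^sub>1 P\<^sub>1(\<theta>) U\<^sub>2 - y\<^sub>2 P\<^sub>2(\<theta>) U\<^sub>1\<close> and
  \<open>g(t - 1) \<Psi> = Q\<^sub>1(\<theta> - e\<^sub>2) U\<^sub>2 - Q\<^sub>2(\<theta> - e\<^sub>1) U\<^sub>1\<close>, and a Bezout identity
  \<open>R(f, g) = A f + B g\<close> evaluated at \<open>t - 1\<close> combines them.\<close>

definition ffact :: "'a::comm_ring_1 \<Rightarrow> nat \<Rightarrow> 'a" where
  "ffact x n = (\<Prod>i<n. x - of_nat i)"

lemma ffact_0 [simp]: "ffact x 0 = 1"
  by (simp add: ffact_def)

lemma ffact_add: "ffact x (m + n) = ffact x m * ffact (x - of_nat m) n"
  by (induction n) (simp_all add: ffact_def algebra_simps)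

lemma ffact_pochhammer: "ffact x n = (- 1) ^ n * pochhammer (- x) n"
  by (induction n) (simp_all add: ffact_def pochhammer_Suc algebra_simps)

lemma ffact_binomial_sum:
  "ffact (a + b) n = (\<Sum>k\<le>n. of_nat (n choose k) * ffact a k * ffact b (n - k))"
proof -
  have "ffact (a + b) n = (- 1) ^ n * pochhammer (- a + - b) n"
    by (simp add: ffact_pochhammer)
  also have "\<dots> = (\<Sum>k\<le>n. of_nat (n choose k) * ((- 1) ^ k * pochhammer (- a) k)
                     * ((- 1) ^ (n - k) * pochhammer (- b) (n - k)))"
    unfolding pochhammer_binomial_sum sum_distrib_left
  proof (rule sum.cong [OF refl])
    fix k assume "k \<in> {..n}"
    then have "(- 1) ^ n = ((- 1) ^ k * (- 1) ^ (n - k) :: 'a)"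
      by (simp flip: power_add)
    then show "(- 1) ^ n * (of_nat (n choose k) * pochhammer (- a) k * pochhammer (- b) (n - k))
        = of_nat (n choose k) * ((- 1) ^ k * pochhammer (- a) k) * ((- 1) ^ (n - k) * pochhammer (- b) (n - k))"
      by (simp add: mult_ac)
  qed
  finally show ?thesis
    by (simp add: ffact_pochhammer)
qed

lemma ffact_of_nat: "ffact (of_nat m :: 'a::field_char_0) n = of_nat ((m choose n) * fact n)"
  by (simp add: ffact_def gbinomial_prod_rev atLeast0LessThan binomial_gbinomial mult.commute)

lemma ffact_of_nat_eq_0: "m < n \<Longrightarrow> ffact (of_nat m) n = 0"
  unfolding ffact_def by (rule prod_zero) auto

lemma ffact_of_nat_neq_0: "n \<le> m \<Longrightarrow> ffact (of_nat m :: 'a::field_char_0) n \<noteq> 0"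
  by (simp add: ffact_of_nat)

text \<open>Both sides are the coefficient obtained from \<open>\<partial>^b y^c \<partial>^d y^z\<close>: on the left after
  normal ordering \<open>\<partial>^b y^c\<close> by the Leibniz rule, on the right by applying the factors one by one.\<close>

lemma ffact_leibniz:
  fixes z :: "'a::field_char_0"
  shows "(\<Sum>k\<le>min b c. of_nat ((b choose k) * (c choose k) * fact k) * ffact z (b + d - k))
    = ffact (z - of_nat d + of_nat c) b * ffact z d"
proof -
  have "(\<Sum>k\<le>min b c. of_nat ((b choose k) * (c choose k) * fact k) * ffact z (b + d - k))
      = (\<Sum>k\<le>b. ffact z d * (of_nat (b choose k) * ffact (of_nat c) k * ffact (z - of_nat d) (b - k)))"
  proof (rule sum.mono_neutral_cong_left)
    show "\<forall>k\<in>{..b} - {..min b c}.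
        ffact z d * (of_nat (b choose k) * ffact (of_nat c) k * ffact (z - of_nat d) (b - k)) = 0"
      by (auto simp: ffact_of_nat_eq_0)
  next
    fix k assume "k \<in> {..min b c}"
    then have "b + d - k = d + (b - k)"
      by auto
    then show "of_nat ((b choose k) * (c choose k) * fact k) * ffact z (b + d - k)
        = ffact z d * (of_nat (b choose k) * ffact (of_nat c) k * ffact (z - of_nat d) (b - k))"
      by (simp add: ffact_add ffact_of_nat)
  qed auto
  also have "\<dots> = ffact z d * ffact (of_nat c + (z - of_nat d)) b"
    by (simp add: ffact_binomial_sum sum_distrib_left)
  finally show ?thesis
    by (simp add: algebra_simps)
qed

text \<open>\<open>wact c u\<close> is the coefficient function of \<open>c (\<Sum>\<^sub>s u(s) y^s)\<close>, using
  \<open>y^a \<partial>^b y^s = ffact s b y^(s - b + a)\<close> in each variable.\<close>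

definition mono_shift :: "nat \<times> nat \<times> nat \<times> nat \<Rightarrow> complex \<times> complex \<Rightarrow> complex \<times> complex" where
  "mono_shift p s = (case p of (a1, a2, b1, b2) \<Rightarrow>
     (fst s - of_nat a1 + of_nat b1, snd s - of_nat a2 + of_nat b2))"

definition mono_coeff :: "nat \<times> nat \<times> nat \<times> nat \<Rightarrow> complex \<times> complex \<Rightarrow> complex" where
  "mono_coeff p s = (case p of (a1, a2, b1, b2) \<Rightarrow>
     ffact (fst s - of_nat a1 + of_nat b1) b1 * ffact (snd s - of_nat a2 + of_nat b2) b2)"

definition wact :: "weyl \<Rightarrow> (complex \<times> complex \<Rightarrow> complex) \<Rightarrow> complex \<times> complex \<Rightarrow> complex" where
  "wact c u s = (\<Sum>p\<in>Poly_Mapping.keys c. Poly_Mapping.lookup c p * mono_coeff p s * u (mono_shift p s))"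

lemma wact_superset:
  assumes "finite S" and "Poly_Mapping.keys c \<subseteq> S"
  shows "wact c u s = (\<Sum>p\<in>S. Poly_Mapping.lookup c p * mono_coeff p s * u (mono_shift p s))"
  unfolding wact_def using assms by (intro sum.mono_neutral_left) (auto simp: in_keys_iff)

lemma wact_zero [simp]: "wact 0 u s = 0"
  by (simp add: wact_def)

lemma wact_single [simp]: "wact (Poly_Mapping.single p r) u s = r * mono_coeff p s * u (mono_shift p s)"
  by (subst wact_superset [of "{p}"]) (auto simp: lookup_single)

lemma wact_add [simp]: "wact (c + d) u s = wact c u s + wact d u s"
proof -
  let ?S = "Poly_Mapping.keys c \<union> Poly_Mapping.keys d"
  have "wact (c + d) u s = (\<Sum>p\<in>?S. Poly_Mapping.lookup (c + d) p * mono_coeff p s * u (mono_shift p s))"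
    by (rule wact_superset) (auto simp: keys_add)
  then show ?thesis
    by (simp add: wact_superset [of ?S c] wact_superset [of ?S d] lookup_add distrib_right sum.distrib)
qed

lemma wact_diff [simp]: "wact (c - d) u s = wact c u s - wact d u s"
proof -
  let ?S = "Poly_Mapping.keys c \<union> Poly_Mapping.keys d"
  have "wact (c - d) u s = (\<Sum>p\<in>?S. Poly_Mapping.lookup (c - d) p * mono_coeff p s * u (mono_shift p s))"
    by (rule wact_superset) (auto simp: in_keys_iff lookup_minus)
  then show ?thesis
    by (simp add: wact_superset [of ?S c] wact_superset [of ?S d] lookup_minus left_diff_distrib sum_subtractf)
qed

lemma wact_uminus [simp]: "wact (- c) u s = - wact c u s"
  using wact_diff [of 0 c u s] by simp

lemma wact_sum: "wact (\<Sum>i\<in>I. c i) u s = (\<Sum>i\<in>I. wact (c i) u s)"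
  by (induction I rule: infinite_finite_induct) simp_all

lemma wact_wscale [simp]: "wact (wscale r c) u s = r * wact c u s"
  unfolding wscale_def wact_sum wact_single wact_def [of c] sum_distrib_left by (simp add: mult_ac)

lemma wact_add_fun: "wact c (\<lambda>s. v s + w s) s = wact c v s + wact c w s"
  by (simp add: wact_def distrib_left sum.distrib)

lemma wact_wmono_mult:
  "wact (wmono_mult p q r) u s
     = r * mono_coeff p s * mono_coeff q (mono_shift p s) * u (mono_shift q (mono_shift p s))"
proof -
  obtain a1 a2 b1 b2 c1 c2 d1 d2 where pq: "p = (a1, a2, b1, b2)" "q = (c1, c2, d1, d2)"
    by (cases p, cases q) auto
  define z1 where "z1 = fst s - of_nat a1 + of_nat b1 - of_nat c1 + of_nat d1"
  define z2 where "z2 = snd s - of_nat a2 + of_nat b2 - of_nat c2 + of_nat d2"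
  define L1 where "L1 k = of_nat ((b1 choose k) * (c1 choose k) * fact k) * ffact z1 (b1 + d1 - k)" for k
  define L2 where "L2 k = of_nat ((b2 choose k) * (c2 choose k) * fact k) * ffact z2 (b2 + d2 - k)" for k
  have "wact (wmono_mult p q r) u s = (\<Sum>k1\<le>min b1 c1. \<Sum>k2\<le>min b2 c2. r * L1 k1 * L2 k2 * u (z1, z2))"
    unfolding wmono_mult_def pq
    by (auto simp: wact_sum mono_coeff_def mono_shift_def L1_def L2_def z1_def z2_def of_nat_diff
          algebra_simps intro!: sum.cong)
  also have "\<dots> = r * (\<Sum>k1\<le>min b1 c1. L1 k1) * (\<Sum>k2\<le>min b2 c2. L2 k2) * u (z1, z2)"
    by (simp add: sum_distrib_left sum_distrib_right mult_ac)
  finally show ?thesis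
    unfolding L1_def L2_def ffact_leibniz
    by (simp add: pq mono_coeff_def mono_shift_def z1_def z2_def algebra_simps)
qed

lemma wact_wmult: "wact (c \<star> d) u = wact c (wact d u)"
  by (rule ext) (simp add: wmult_def wact_sum wact_wmono_mult wact_def [of c] wact_def [of d]
      sum_distrib_left mult_ac)

lemma mono_unique_at_nat:
  assumes shift: "mono_shift (a1', a2', b1', b2') (of_nat a1, of_nat a2) = (of_nat b1, of_nat b2)"
    and coeff: "mono_coeff (a1', a2', b1', b2') (of_nat a1, of_nat a2) \<noteq> 0"
    and order: "b1 + b2 \<le> b1' + b2'"
  shows "(a1', a2', b1', b2') = (a1, a2, b1, b2)"
proof -
  from shift have "of_nat (a1 + b1') = (of_nat (b1 + a1') :: complex)"
    and "of_nat (a2 + b2') = (of_nat (b2 + a2') :: complex)"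
    by (simp_all add: mono_shift_def algebra_simps)
  then have a1: "a1 + b1' = b1 + a1'" and a2: "a2 + b2' = b2 + a2'"
    by (simp_all only: of_nat_eq_iff)
  from shift coeff have "ffact (of_nat b1 :: complex) b1' \<noteq> 0" and "ffact (of_nat b2 :: complex) b2' \<noteq> 0"
    by (auto simp: mono_shift_def mono_coeff_def)
  then have "b1' \<le> b1" and "b2' \<le> b2"
    by (meson ffact_of_nat_eq_0 not_le)+
  with order a1 a2 show ?thesis
    by simp
qed

text \<open>Test \<open>c\<close> on \<open>y^b\<close>, where \<open>y^a \<partial>^b\<close> is a monomial of \<open>c\<close> of least order in \<open>\<partial>\<close>:
  by \<open>mono_unique_at_nat\<close> it is the only monomial contributing to the coefficient of \<open>y^a\<close>.\<close>

lemma wact_eq_0_imp_eq_0: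
  assumes "\<And>u s. wact c u s = 0"
  shows "c = 0"
proof (rule ccontr)
  assume "c \<noteq> 0"
  then obtain p0 where "p0 \<in> Poly_Mapping.keys c"
    by (metis all_not_in_conv keys_eq_empty)
  then obtain p0 where p0: "p0 \<in> Poly_Mapping.keys c"
    and p0_min: "\<And>p. p \<in> Poly_Mapping.keys c \<Longrightarrow>
      fst (snd (snd p0)) + snd (snd (snd p0)) \<le> fst (snd (snd p)) + snd (snd (snd p))"
    using ex_has_least_nat [of "\<lambda>p. p \<in> Poly_Mapping.keys c" p0 "\<lambda>p. fst (snd (snd p)) + snd (snd (snd p))"]
    by blast
  obtain a1 a2 b1 b2 where p0_eq: "p0 = (a1, a2, b1, b2)"
    by (cases p0) auto
  define x :: "complex \<times> complex" where "x = (of_nat a1, of_nat a2)"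
  define u :: "complex \<times> complex \<Rightarrow> complex"
    where "u s = (if s = (of_nat b1, of_nat b2) then 1 else 0)" for s
  have "wact c u x = (\<Sum>p\<in>Poly_Mapping.keys c. if p = p0 then Poly_Mapping.lookup c p0 * mono_coeff p0 x else 0)"
    unfolding wact_def
  proof (rule sum.cong [OF refl])
    fix p assume p: "p \<in> Poly_Mapping.keys c"
    obtain a1' a2' b1' b2' where p_eq: "p = (a1', a2', b1', b2')"
      by (cases p) auto
    have "mono_coeff p x * u (mono_shift p x) = 0" if "p \<noteq> p0"
      using mono_unique_at_nat [of a1' a2' b1' b2' a1 a2 b1 b2] p0_min [OF p] that
      by (auto simp: u_def x_def p_eq p0_eq)
    then show "Poly_Mapping.lookup c p * mono_coeff p x * u (mono_shift p x)
        = (if p = p0 then Poly_Mapping.lookup c p0 * mono_coeff p0 x else 0)"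
      by (auto simp: u_def x_def p0_eq mono_shift_def)
  qed
  also have "\<dots> = Poly_Mapping.lookup c p0 * mono_coeff p0 x"
    using p0 by simp
  also have "\<dots> \<noteq> 0"
    using p0 by (simp add: in_keys_iff x_def p0_eq mono_coeff_def ffact_of_nat_neq_0)
  finally show False
    using assms by simp
qed

lemma wact_inj:
  assumes "\<And>u s. wact c u s = wact d u s"
  shows "c = d"
  using wact_eq_0_imp_eq_0 [of "c - d"] assms by simp

lemma wmult_assoc: "(c \<star> d) \<star> e = c \<star> (d \<star> e)"
  by (rule wact_inj) (simp add: wact_wmult)

lemma wmult_distrib_left: "c \<star> (d + e) = c \<star> d + c \<star> e"
proof (rule wact_inj)
  fix u s
  have "wact (d + e) u = (\<lambda>s. wact d u s + wact e u s)"
    by (rule ext) simp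
  then show "wact (c \<star> (d + e)) u s = wact (c \<star> d + c \<star> e) u s"
    by (simp add: wact_wmult wact_add_fun)
qed

lemma wmult_distrib_right: "(c + d) \<star> e = c \<star> e + d \<star> e"
  by (rule wact_inj) (simp add: wact_wmult)

lemma left_ideal2_add:
  assumes "a \<in> left_ideal2 u v" and "b \<in> left_ideal2 u v"
  shows "a + b \<in> left_ideal2 u v"
proof -
  obtain a1 a2 b1 b2 where "a = a1 \<star> u + a2 \<star> v" and "b = b1 \<star> u + b2 \<star> v"
    using assms by (auto simp: left_ideal2_def)
  then have "a + b = (a1 + b1) \<star> u + (a2 + b2) \<star> v"
    by (simp add: wmult_distrib_right algebra_simps)
  then show ?thesis
    by (auto simp: left_ideal2_def)
qed

lemma left_ideal2_wmult:
  assumes "a \<in> left_ideal2 u v"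
  shows "c \<star> a \<in> left_ideal2 u v"
proof -
  obtain a1 a2 where "a = a1 \<star> u + a2 \<star> v"
    using assms by (auto simp: left_ideal2_def)
  then have "c \<star> a = (c \<star> a1) \<star> u + (c \<star> a2) \<star> v"
    by (simp add: wmult_distrib_left wmult_assoc)
  then show ?thesis
    by (auto simp: left_ideal2_def)
qed

lemma wact_wone [simp]: "wact wone u s = u s"
  by (simp add: wone_def mono_coeff_def mono_shift_def)

lemma wact_wy1 [simp]: "wact wy1 u s = u (fst s - 1, snd s)"
  by (simp add: wy1_def mono_coeff_def mono_shift_def)

lemma wact_wy2 [simp]: "wact wy2 u s = u (fst s, snd s - 1)"
  by (simp add: wy2_def mono_coeff_def mono_shift_def)

lemma wact_theta1 [simp]: "wact theta1 u s = fst s * u s"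
  by (simp add: theta1_def mono_coeff_def mono_shift_def ffact_def)

lemma wact_theta2 [simp]: "wact theta2 u s = snd s * u s"
  by (simp add: theta2_def mono_coeff_def mono_shift_def ffact_def)

text \<open>Polynomials in the Euler operators act diagonally on the monomials \<open>y^s\<close>.\<close>

definition diagonal_op :: "weyl \<Rightarrow> bool" where
  "diagonal_op c \<longleftrightarrow> (\<forall>u s. wact c u s = wact c (\<lambda>_. 1) s * u s)"

lemma diagonal_opD: "diagonal_op c \<Longrightarrow> wact c u s = wact c (\<lambda>_. 1) s * u s"
  unfolding diagonal_op_def by blast

lemma diagonal_op_wone [simp]: "diagonal_op wone"
  by (simp add: diagonal_op_def)

lemma diagonal_op_theta1 [simp]: "diagonal_op theta1"
  by (simp add: diagonal_op_def)

lemma diagonal_op_theta2 [simp]: "diagonal_op theta2"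
  by (simp add: diagonal_op_def)

lemma diagonal_op_add [simp]:
  assumes "diagonal_op c" and "diagonal_op d"
  shows "diagonal_op (c + d)"
proof -
  have "wact (c + d) u s = wact (c + d) (\<lambda>_. 1) s * u s" for u s
    using diagonal_opD [OF assms(1), of u s] diagonal_opD [OF assms(2), of u s]
    by (simp add: distrib_right)
  then show ?thesis
    unfolding diagonal_op_def by blast
qed

lemma diagonal_op_diff [simp]:
  assumes "diagonal_op c" and "diagonal_op d"
  shows "diagonal_op (c - d)"
proof -
  have "wact (c - d) u s = wact (c - d) (\<lambda>_. 1) s * u s" for u s
    using diagonal_opD [OF assms(1), of u s] diagonal_opD [OF assms(2), of u s]
    by (simp add: left_diff_distrib)
  then show ?thesis
    unfolding diagonal_op_def by blast
qed

lemma wact_wpow: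
  assumes "diagonal_op c"
  shows "wact (wpow c n) u s = wact c (\<lambda>_. 1) s ^ n * u s"
proof (induction n)
  case (Suc n)
  then show ?case
    using diagonal_opD [OF assms, of "wact (wpow c n) u" s] by (simp add: wact_wmult)
qed simp

definition bipoly_val :: "bipoly \<Rightarrow> complex \<Rightarrow> complex \<Rightarrow> complex" where
  "bipoly_val P s1 s2 =
     (\<Sum>(i, j)\<in>Poly_Mapping.keys P. Poly_Mapping.lookup P (i, j) * s1 ^ i * s2 ^ j)"

lemma wact_bieval [simp]:
  assumes "diagonal_op x1" and "diagonal_op x2"
  shows "wact (bieval P x1 x2) u s = bipoly_val P (wact x1 (\<lambda>_. 1) s) (wact x2 (\<lambda>_. 1) s) * u s"
  by (simp add: bieval_def bipoly_val_def wact_sum case_prod_beta wact_wmult wact_wpow assms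
      sum_distrib_left mult_ac)

lemma wact_ueval [simp]:
  assumes "diagonal_op x"
  shows "wact (ueval f x) u s = poly f (wact x (\<lambda>_. 1) s) * u s"
  by (simp add: ueval_def poly_altdef wact_sum wact_wpow assms sum_distrib_left mult_ac)

lemma resultant_bezout:
  fixes f g :: "'a::{field_gcd, semiring_gcd_mult_normalize, factorial_ring_gcd} poly"
  assumes "f \<noteq> 0 \<or> g \<noteq> 0"
  obtains a b where "[:resultant f g:] = a * f + b * g"
proof (cases "resultant f g = 0")
  case True
  then show ?thesis
    by (intro that [of 0 0]) simp
next
  case False
  then obtain c where c: "gcd f g = [:c:]"
    using resultant_0_gcd [of f g] degree0_coeffs by blast
  with assms have "c \<noteq> 0"
    by auto
  obtain x y where xy: "x * f + y * g = gcd f g"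
    using bezout_coefficients_fst_snd [of f g] by blast
  define r where "r = resultant f g / c"
  have "[:resultant f g:] = smult r (gcd f g)"
    using c \<open>c \<noteq> 0\<close> by (simp add: r_def)
  also have "\<dots> = smult r x * f + smult r y * g"
    by (simp flip: xy add: smult_add_right)
  finally show ?thesis
    by (rule that)
qed

lemma wscale_bezout:
  assumes "diagonal_op x" and "[:r:] = a * f + b * g"
  shows "wscale r c = ueval a x \<star> (ueval f x \<star> c) + ueval b x \<star> (ueval g x \<star> c)"
proof (rule wact_inj)
  fix u s
  show "wact (wscale r c) u s = wact (ueval a x \<star> (ueval f x \<star> c) + ueval b x \<star> (ueval g x \<star> c)) u s"
    using arg_cong [OF assms(2), of "\<lambda>p. poly p (wact x (\<lambda>_. 1) s)"] assms(1)
    by (simp add: wact_wmult algebra_simps)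
qed

definition U_op :: "complex poly \<Rightarrow> complex poly \<Rightarrow> bipoly \<Rightarrow> bipoly \<Rightarrow> weyl \<Rightarrow> weyl" where
  "U_op f g Q P y = ueval f (theta1 + theta2) \<star> bieval Q theta1 theta2
     - y \<star> ueval g (theta1 + theta2) \<star> bieval P theta1 theta2"

definition Psi_op :: "bipoly \<Rightarrow> bipoly \<Rightarrow> bipoly \<Rightarrow> bipoly \<Rightarrow> weyl" where
  "Psi_op P1 P2 Q1 Q2 = wy1 \<star> bieval Q2 theta1 theta2 \<star> bieval P1 theta1 theta2
     - wy2 \<star> bieval Q1 theta1 theta2 \<star> bieval P2 theta1 theta2"

lemma f_Psi_op_in_ideal:
  assumes "(wy1 \<star> bieval P1 theta1 theta2) \<star> (wy2 \<star> bieval P2 theta1 theta2)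
    - (wy2 \<star> bieval P2 theta1 theta2) \<star> (wy1 \<star> bieval P1 theta1 theta2) = 0"
  shows "ueval f (theta1 + theta2 - wone) \<star> Psi_op P1 P2 Q1 Q2
    \<in> left_ideal2 (U_op f g Q1 P1 wy1) (U_op f g Q2 P2 wy2)"
proof -
  have P_comm: "bipoly_val P1 (s1 - 1) s2 * bipoly_val P2 (s1 - 1) (s2 - 1)
      = bipoly_val P2 s1 (s2 - 1) * bipoly_val P1 (s1 - 1) (s2 - 1)" for s1 s2
    using arg_cong [OF assms, of "\<lambda>c. wact c (\<lambda>_. 1) (s1, s2)"] by (simp add: wact_wmult)
  have "ueval f (theta1 + theta2 - wone) \<star> Psi_op P1 P2 Q1 Q2
      = (- (wy2 \<star> bieval P2 theta1 theta2)) \<star> U_op f g Q1 P1 wy1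
        + (wy1 \<star> bieval P1 theta1 theta2) \<star> U_op f g Q2 P2 wy2"
  proof (rule wact_inj)
    fix u and s :: "complex \<times> complex"
    obtain s1 s2 where s: "s = (s1, s2)"
      by (cases s)
    have shifts: "s1 - 1 + s2 = s1 + s2 - 1" "s1 + (s2 - 1) = s1 + s2 - 1"
      by simp_all
    show "wact (ueval f (theta1 + theta2 - wone) \<star> Psi_op P1 P2 Q1 Q2) u s
      = wact ((- (wy2 \<star> bieval P2 theta1 theta2)) \<star> U_op f g Q1 P1 wy1
        + (wy1 \<star> bieval P1 theta1 theta2) \<star> U_op f g Q2 P2 wy2) u s"
      using P_comm [of s1 s2]
      by (simp add: U_op_def Psi_op_def wact_wmult s shifts) (simp add: algebra_simps)
  qed
  then show ?thesis
    unfolding left_ideal2_def by blast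
qed

lemma g_Psi_op_in_ideal:
  assumes "bieval Q2 theta1 (theta2 + wone) \<star> bieval Q1 (theta1 + wone) (theta2 + wone)
    = bieval Q1 (theta1 + wone) theta2 \<star> bieval Q2 (theta1 + wone) (theta2 + wone)"
  shows "ueval g (theta1 + theta2 - wone) \<star> Psi_op P1 P2 Q1 Q2
    \<in> left_ideal2 (U_op f g Q1 P1 wy1) (U_op f g Q2 P2 wy2)"
proof -
  have Q_shift: "bipoly_val Q2 (s1 - 1) s2 * bipoly_val Q1 s1 s2
      = bipoly_val Q1 s1 (s2 - 1) * bipoly_val Q2 s1 s2" for s1 s2
    using arg_cong [OF assms, of "\<lambda>c. wact c (\<lambda>_. 1) (s1 - 1, s2 - 1)"] by (simp add: wact_wmult)
  have "ueval g (theta1 + theta2 - wone) \<star> Psi_op P1 P2 Q1 Q2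
      = (- bieval Q2 (theta1 - wone) theta2) \<star> U_op f g Q1 P1 wy1
        + bieval Q1 theta1 (theta2 - wone) \<star> U_op f g Q2 P2 wy2"
  proof (rule wact_inj)
    fix u and s :: "complex \<times> complex"
    obtain s1 s2 where s: "s = (s1, s2)"
      by (cases s)
    have shifts: "s1 - 1 + s2 = s1 + s2 - 1" "s1 + (s2 - 1) = s1 + s2 - 1"
      by simp_all
    show "wact (ueval g (theta1 + theta2 - wone) \<star> Psi_op P1 P2 Q1 Q2) u s
      = wact ((- bieval Q2 (theta1 - wone) theta2) \<star> U_op f g Q1 P1 wy1
        + bieval Q1 theta1 (theta2 - wone) \<star> U_op f g Q2 P2 wy2) u s"
      using Q_shift [of s1 s2]
      by (simp add: U_op_def Psi_op_def wact_wmult s shifts) (simp add: algebra_simps)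
  qed
  then show ?thesis
    unfolding left_ideal2_def by blast
qed

theorem lemma11p4:
  fixes f g :: "complex poly" and P1 P2 Q1 Q2 :: bipoly
  assumes "f \<noteq> 0" and "g \<noteq> 0"
    and "degree f + bideg Q1 = degree g + bideg P1"
    and "degree f + bideg Q2 = degree g + bideg P2"
    and "\<forall>P\<in>{P1, P2, Q1, Q2}. \<not> (\<forall>y1 y2 z1 z2. y1 * z1 + y2 * z2 = 0 \<longrightarrow>
            psymb (bieval P theta1 theta2) y1 y2 z1 z2 = 0)"
    and "(wy1 \<star> bieval P1 theta1 theta2) \<star> (wy2 \<star> bieval P2 theta1 theta2)
         - (wy2 \<star> bieval P2 theta1 theta2) \<star> (wy1 \<star> bieval P1 theta1 theta2) = 0"
    and "bieval Q2 theta1 (theta2 + wone) \<star> bieval Q1 (theta1 + wone) (theta2 + wone)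
         = bieval Q1 (theta1 + wone) theta2 \<star> bieval Q2 (theta1 + wone) (theta2 + wone)"
  defines "t \<equiv> theta1 + theta2"
  defines "U1 \<equiv> ueval f t \<star> bieval Q1 theta1 theta2 - wy1 \<star> ueval g t \<star> bieval P1 theta1 theta2"
    and "U2 \<equiv> ueval f t \<star> bieval Q2 theta1 theta2 - wy2 \<star> ueval g t \<star> bieval P2 theta1 theta2"
    and "Psi \<equiv> wy1 \<star> bieval Q2 theta1 theta2 \<star> bieval P1 theta1 theta2
              - wy2 \<star> bieval Q1 theta1 theta2 \<star> bieval P2 theta1 theta2"
  shows "wscale (resultant f g) Psi \<in> left_ideal2 U1 U2"
proof -
  have ops: "U1 = U_op f g Q1 P1 wy1" "U2 = U_op f g Q2 P2 wy2" "Psi = Psi_op P1 P2 Q1 Q2"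
    by (simp_all add: U1_def U2_def Psi_def U_op_def Psi_op_def t_def)
  obtain A B where "[:resultant f g:] = A * f + B * g"
    using resultant_bezout assms(1) by blast
  then have "wscale (resultant f g) Psi
      = ueval A (t - wone) \<star> (ueval f (t - wone) \<star> Psi) + ueval B (t - wone) \<star> (ueval g (t - wone) \<star> Psi)"
    by (simp add: wscale_bezout t_def)
  moreover have "ueval f (t - wone) \<star> Psi \<in> left_ideal2 U1 U2"
    using f_Psi_op_in_ideal [OF assms(6)] by (simp add: ops t_def)
  moreover have "ueval g (t - wone) \<star> Psi \<in> left_ideal2 U1 U2"
    using g_Psi_op_in_ideal [OF assms(7)] by (simp add: ops t_def)
  ultimately show ?thesis
    by (simp add: left_ideal2_add left_ideal2_wmult)
qed

end
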